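(* Let $f:\{0,1\}^n\to\{0,1\}$, $J\subseteq[n]$, and let $f_J$ be a $J$-symmetric function closest to $f$. Then $$\mathrm{dist}(f,f_J)\le\mathrm{SymInf}_f(J)\le 2\cdot\mathrm{dist}(f,f_J).$$
   Context: $\mathcal{S}_J$ is the set of permutations of $[n]$ fixing every element outside $J$; for a permutation $\pi$, $\pi x$ is the vector whose $\pi(i)$-th coordinate is $x_i$. $f$ is $J$-symmetric if $f(\pi x)=f(x)$ for all $x$ and $\pi\in\mathcal{S}_J$. $\mathrm{dist}(f,g)=\Pr_x[f(x)\ne g(x)]$ for uniform $x\in\{0,1\}^n$. $\mathrm{SymInf}_f(J)=\Pr_{x,\pi}[f(x)\ne f(\pi x)]$ with $x$ uniform in $\{0,1\}^n$ and $\pi$ uniform in $\mathcal{S}_J$. *)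

theory Defs
  imports Complex_Main "HOL-Combinatorics.Permutations"
begin

text \<open>Coordinates [n] are modelled by a finite type 'n; points of {0,1}^n are
  functions 'n \<Rightarrow> bool; Boolean functions map to bool.\<close>

definition perm_act :: "('n \<Rightarrow> 'n) \<Rightarrow> ('n \<Rightarrow> bool) \<Rightarrow> ('n \<Rightarrow> bool)" where
  "perm_act \<pi> x = (\<lambda>j. x (inv \<pi> j))"   \<comment> \<open>(\<pi> x)_{\<pi> i} = x_i\<close>

definition sym_group :: "'n set \<Rightarrow> ('n \<Rightarrow> 'n) set" where
  "sym_group J = {\<pi>. \<pi> permutes J}"

definition J_symmetric :: "'n set \<Rightarrow> (('n \<Rightarrow> bool) \<Rightarrow> bool) \<Rightarrow> bool" where
  "J_symmetric J f \<longleftrightarrow> (\<forall>x. \<forall>\<pi>\<in>sym_group J. f (perm_act \<pi> x) = f x)"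

definition bdist :: "(('n::finite \<Rightarrow> bool) \<Rightarrow> bool) \<Rightarrow> (('n \<Rightarrow> bool) \<Rightarrow> bool) \<Rightarrow> real" where
  "bdist f g = real (card {x. f x \<noteq> g x}) / real (card (UNIV :: ('n \<Rightarrow> bool) set))"

definition SymInf :: "(('n::finite \<Rightarrow> bool) \<Rightarrow> bool) \<Rightarrow> 'n set \<Rightarrow> real" where
  "SymInf f J = real (card {(x, \<pi>). \<pi> \<in> sym_group J \<and> f x \<noteq> f (perm_act \<pi> x)})
     / (real (card (UNIV :: ('n \<Rightarrow> bool) set)) * real (card (sym_group J)))"

end

theory Submission
  imports Defs
begin

text \<open>Let \<open>p x\<close> be the fraction of \<open>\<pi> \<in> S\<^sub>J\<close> with \<open>f (\<pi> x)\<close> true; \<open>p\<close> is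
  constant on \<open>S\<^sub>J\<close>-orbits, and in a sum over all \<open>x\<close> the value \<open>f x\<close> may be replaced
  by \<open>p x\<close> whenever it is multiplied by an orbit-invariant factor. Hence the majority
  vote \<open>g x = (p x \<ge> 1/2)\<close>, which is \<open>J\<close>-symmetric, has \<open>dist(f, g) = E min(p, 1 - p)\<close>,
  while \<open>SymInf\<^sub>f(J) = E [f (1 - p) + (1 - f) p] = E 2p(1 - p)\<close>. Since
  \<open>min(p, 1 - p) \<le> 2p(1 - p)\<close>, minimality of \<open>f\<^sub>J\<close> gives the lower bound. The upper bound
  is the triangle inequality \<open>[f x \<noteq> f (\<pi> x)] \<le> [f x \<noteq> f\<^sub>J x] + [f (\<pi> x) \<noteq> f\<^sub>J (\<pi> x)]\<close>
  averaged over \<open>x\<close> and \<open>\<pi>\<close>.\<close>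

lemma perm_act_comp:
  assumes "bij p" "bij q"
  shows "perm_act p (perm_act q x) = perm_act (p \<circ> q) x"
  unfolding perm_act_def using o_inv_distrib[OF assms] by (simp add: o_def)

lemma bij_perm_act:
  assumes "bij p"
  shows "bij (perm_act p)"
proof (rule o_bij)
  show "perm_act (inv p) \<circ> perm_act p = id" "perm_act p \<circ> perm_act (inv p) = id"
    using assms by (auto simp: perm_act_def fun_eq_iff bij_is_inj bij_is_surj surj_f_inv_f inv_inv_eq)
qed

lemma sum_perm_act:
  fixes h :: "('n::finite \<Rightarrow> bool) \<Rightarrow> 'a::comm_monoid_add"
  assumes "bij p"
  shows "(\<Sum>x\<in>UNIV. h (perm_act p x)) = (\<Sum>x\<in>UNIV. h x)"
  using sum.reindex_bij_betw[OF bij_perm_act[OF assms], of h] by simp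

lemma finite_sym_group: "finite (sym_group (J::'n::finite set))"
  unfolding sym_group_def by simp

lemma card_sym_group_pos: "card (sym_group (J::'n::finite set)) > 0"
  using finite_sym_group permutes_id unfolding sym_group_def
  by (metis card_gt_0_iff empty_iff mem_Collect_eq)

definition orbit_avg :: "'n set \<Rightarrow> (('n \<Rightarrow> bool) \<Rightarrow> real) \<Rightarrow> ('n \<Rightarrow> bool) \<Rightarrow> real" where
  "orbit_avg J h x = (\<Sum>\<pi>\<in>sym_group J. h (perm_act \<pi> x)) / card (sym_group J)"

lemma orbit_avg_cong:
  assumes "\<And>\<pi>. \<pi> \<in> sym_group J \<Longrightarrow> h (perm_act \<pi> x) = h' (perm_act \<pi> x)"
  shows "orbit_avg J h x = orbit_avg J h' x"
  unfolding orbit_avg_def using assms by simp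

lemma orbit_avg_perm_act:
  assumes "\<sigma> \<in> sym_group J"
  shows "orbit_avg J h (perm_act \<sigma> x) = orbit_avg J h x"
proof -
  have \<sigma>: "\<sigma> permutes J" using assms unfolding sym_group_def by simp
  have "(\<Sum>\<pi>\<in>sym_group J. h (perm_act \<pi> (perm_act \<sigma> x)))
      = (\<Sum>\<pi>\<in>sym_group J. h (perm_act (\<pi> \<circ> \<sigma>) x))"
    using \<sigma> by (intro sum.cong refl) (auto simp: sym_group_def perm_act_comp dest!: permutes_bij)
  also have "\<dots> = (\<Sum>\<pi>\<in>sym_group J. h (perm_act \<pi> x))"
    using sum_permutations_compose_right[OF \<sigma>, of "\<lambda>\<pi>. h (perm_act \<pi> x)"]
    by (simp add: sym_group_def)
  finally show ?thesis unfolding orbit_avg_def by simp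
qed

lemma orbit_avg_mult_invariant:
  assumes "\<And>\<pi>. \<pi> \<in> sym_group J \<Longrightarrow> \<phi> (perm_act \<pi> x) = \<phi> x"
  shows "orbit_avg J (\<lambda>y. h y * \<phi> y) x = orbit_avg J h x * \<phi> x"
  unfolding orbit_avg_def using assms by (simp add: sum_distrib_right)

lemma orbit_avg_not:
  "orbit_avg (J::'n::finite set) (\<lambda>y. of_bool (\<not> P y)) x = 1 - orbit_avg J (\<lambda>y. of_bool (P y)) x"
proof -
  have "(\<Sum>\<pi>\<in>sym_group J. of_bool (\<not> P (perm_act \<pi> x)) :: real)
      = real (card (sym_group J)) - (\<Sum>\<pi>\<in>sym_group J. of_bool (P (perm_act \<pi> x)))"
    by (simp add: sum_subtractf of_bool_not_iff del: sum_of_bool_eq)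
  then show ?thesis
    unfolding orbit_avg_def using card_sym_group_pos[of J]
    by (simp add: diff_divide_distrib card_gt_0_iff del: sum_of_bool_eq)
qed

lemma orbit_avg_bounds:
  assumes "\<And>y. 0 \<le> h y" "\<And>y. h y \<le> 1"
  shows "0 \<le> orbit_avg (J::'n::finite set) h x" "orbit_avg J h x \<le> 1"
proof -
  have "(\<Sum>\<pi>\<in>sym_group J. h (perm_act \<pi> x)) \<le> card (sym_group J)"
    using sum_mono[of "sym_group J" "\<lambda>\<pi>. h (perm_act \<pi> x)" "\<lambda>_. 1"] assms(2) by simp
  then show "orbit_avg J h x \<le> 1"
    unfolding orbit_avg_def using card_sym_group_pos[of J] by simp
  show "0 \<le> orbit_avg J h x"
    unfolding orbit_avg_def using assms(1) by (simp add: sum_nonneg)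
qed

text \<open>Each \<open>x \<mapsto> \<pi> x\<close> is a bijection of \<open>{0,1}\<^sup>n\<close>, so averaging over orbits
  does not change a sum over all points.\<close>

lemma sum_orbit_avg:
  fixes h :: "('n::finite \<Rightarrow> bool) \<Rightarrow> real"
  shows "(\<Sum>x\<in>UNIV. orbit_avg J h x) = (\<Sum>x\<in>UNIV. h x)"
proof -
  have "(\<Sum>x\<in>UNIV. \<Sum>\<pi>\<in>sym_group J. h (perm_act \<pi> x))
      = (\<Sum>\<pi>\<in>sym_group J. \<Sum>x\<in>UNIV. h (perm_act \<pi> x))"
    by (rule sum.swap)
  also have "\<dots> = card (sym_group J) * (\<Sum>x\<in>UNIV. h x)"
    by (simp add: sum_perm_act sym_group_def permutes_bij)
  finally show ?thesis
    unfolding orbit_avg_def using card_sym_group_pos[of J]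
    by (simp add: sum_divide_distrib[symmetric] card_gt_0_iff)
qed

lemma sum_mult_orbit_invariant:
  fixes h \<phi> :: "('n::finite \<Rightarrow> bool) \<Rightarrow> real"
  assumes "\<And>x \<pi>. \<pi> \<in> sym_group J \<Longrightarrow> \<phi> (perm_act \<pi> x) = \<phi> x"
  shows "(\<Sum>x\<in>UNIV. h x * \<phi> x) = (\<Sum>x\<in>UNIV. orbit_avg J h x * \<phi> x)"
  using sum_orbit_avg[of J "\<lambda>y. h y * \<phi> y"] orbit_avg_mult_invariant[OF assms] by simp

lemma bdist_eq_sum:
  fixes f g :: "('n::finite \<Rightarrow> bool) \<Rightarrow> bool"
  shows "bdist f g = (\<Sum>x\<in>UNIV. of_bool (f x \<noteq> g x)) / real (card (UNIV :: ('n \<Rightarrow> bool) set))"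
  unfolding bdist_def by simp

lemma SymInf_eq_sum:
  fixes f :: "('n::finite \<Rightarrow> bool) \<Rightarrow> bool"
  shows "SymInf f J = (\<Sum>x\<in>UNIV. orbit_avg J (\<lambda>y. of_bool (f x \<noteq> f y)) x)
     / real (card (UNIV :: ('n \<Rightarrow> bool) set))"
proof -
  have "(\<Sum>x\<in>UNIV. \<Sum>\<pi>\<in>sym_group J. of_bool (f x \<noteq> f (perm_act \<pi> x)))
      = (\<Sum>(x, \<pi>)\<in>UNIV \<times> sym_group J. of_bool (f x \<noteq> f (perm_act \<pi> x)) :: real)"
    by (rule sum.cartesian_product)
  also have "\<dots> = real (card {(x, \<pi>). \<pi> \<in> sym_group J \<and> f x \<noteq> f (perm_act \<pi> x)})"
  proof -
    have "{(x, \<pi>). \<pi> \<in> sym_group J \<and> f x \<noteq> f (perm_act \<pi> x)}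
        = (UNIV \<times> sym_group J) \<inter> {z. f (fst z) \<noteq> f (perm_act (snd z) (fst z))}"
      by auto
    then show ?thesis
      using sum_of_bool_eq[OF finite_cartesian_product[OF finite_UNIV finite_sym_group],
          where P = "\<lambda>z. f (fst z) \<noteq> f (perm_act (snd z) (fst z))" and 'a = real]
      by (simp add: split_def)
  qed
  finally show ?thesis
    unfolding SymInf_def orbit_avg_def
    by (simp add: sum_divide_distrib[symmetric] field_simps)
qed

lemma SymInf_le_twice_bdist:
  fixes f g :: "('n::finite \<Rightarrow> bool) \<Rightarrow> bool"
  assumes "J_symmetric J g"
  shows "SymInf f J \<le> 2 * bdist f g"
proof -
  define e where "e y = (of_bool (f y \<noteq> g y) :: real)" for y
  have triangle: "orbit_avg J (\<lambda>y. of_bool (f x \<noteq> f y)) x \<le> e x + orbit_avg J e x" for x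
  proof -
    have "(\<Sum>\<pi>\<in>sym_group J. of_bool (f x \<noteq> f (perm_act \<pi> x)))
        \<le> (\<Sum>\<pi>\<in>sym_group J. e x + e (perm_act \<pi> x))"
      using assms by (intro sum_mono) (auto simp: J_symmetric_def e_def)
    then show ?thesis
      using card_sym_group_pos[of J]
      by (simp add: orbit_avg_def sum.distrib field_simps del: sum_of_bool_eq)
  qed
  have "(\<Sum>x\<in>UNIV. orbit_avg J (\<lambda>y. of_bool (f x \<noteq> f y)) x)
      \<le> (\<Sum>x\<in>UNIV. e x + orbit_avg J e x)"
    by (rule sum_mono) (rule triangle)
  also have "\<dots> = 2 * (\<Sum>x\<in>UNIV. e x)"
    by (simp add: sum.distrib sum_orbit_avg)
  finally show ?thesis
    unfolding SymInf_eq_sum bdist_eq_sum e_def by (simp add: divide_right_mono)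
qed

definition majority :: "'n set \<Rightarrow> (('n \<Rightarrow> bool) \<Rightarrow> bool) \<Rightarrow> ('n \<Rightarrow> bool) \<Rightarrow> bool" where
  "majority J f x \<longleftrightarrow> 1/2 \<le> orbit_avg J (\<lambda>y. of_bool (f y)) x"

lemma J_symmetric_majority: "J_symmetric J (majority J f)"
  unfolding J_symmetric_def majority_def by (simp add: orbit_avg_perm_act)

lemma min_le_twice_mult_compl:
  fixes p :: real
  assumes "0 \<le> p" "p \<le> 1"
  shows "min p (1 - p) \<le> 2 * p * (1 - p)"
  using assms mult_left_mono[of 1 "2 * p" "1 - p"] mult_left_mono[of 1 "2 * (1 - p)" p]
  by (cases "1/2 \<le> p") (auto simp: algebra_simps)

lemma bdist_majority_le_SymInf:
  fixes f :: "('n::finite \<Rightarrow> bool) \<Rightarrow> bool"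
  shows "bdist f (majority J f) \<le> SymInf f J"
proof -
  define p where "p = orbit_avg J (\<lambda>y. of_bool (f y))"
  have p_bounds: "0 \<le> p x" "p x \<le> 1" for x
    unfolding p_def by (rule orbit_avg_bounds; simp)+
  have majority_error: "orbit_avg J (\<lambda>y. of_bool (f y \<noteq> majority J f y)) x = min (p x) (1 - p x)" for x
  proof -
    have "orbit_avg J (\<lambda>y. of_bool (f y \<noteq> majority J f y)) x
        = orbit_avg J (\<lambda>y. of_bool (f y \<noteq> majority J f x)) x"
      using J_symmetric_majority[of J f] by (intro orbit_avg_cong) (simp add: J_symmetric_def)
    then show ?thesis
      by (cases "majority J f x") (auto simp: orbit_avg_not p_def majority_def)
  qed
  have replace_p_by_f:
    "(\<Sum>x\<in>UNIV. of_bool (f x) * (1 - 2 * p x)) = (\<Sum>x\<in>UNIV. p x * (1 - 2 * p x))"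
    unfolding p_def by (rule sum_mult_orbit_invariant) (simp add: orbit_avg_perm_act)
  have "(\<Sum>x\<in>UNIV. of_bool (f x \<noteq> majority J f x))
      = (\<Sum>x\<in>UNIV. orbit_avg J (\<lambda>y. of_bool (f y \<noteq> majority J f y)) x)"
    by (rule sum_orbit_avg[symmetric])
  also have "\<dots> = (\<Sum>x\<in>UNIV. min (p x) (1 - p x))"
    by (simp only: majority_error)
  also have "\<dots> \<le> (\<Sum>x\<in>UNIV. 2 * p x * (1 - p x))"
    by (intro sum_mono min_le_twice_mult_compl p_bounds)
  also have "\<dots> = (\<Sum>x\<in>UNIV. p x * (1 - 2 * p x) + p x)"
    by (intro sum.cong refl) (simp add: algebra_simps)
  also have "\<dots> = (\<Sum>x\<in>UNIV. of_bool (f x) * (1 - 2 * p x) + p x)"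
    using replace_p_by_f by (simp add: sum.distrib)
  also have "\<dots> = (\<Sum>x\<in>UNIV. of_bool (f x) * (1 - p x) + (1 - of_bool (f x)) * p x)"
    by (intro sum.cong refl) (simp add: algebra_simps)
  also have "\<dots> = (\<Sum>x\<in>UNIV. orbit_avg J (\<lambda>y. of_bool (f x \<noteq> f y)) x)"
    by (intro sum.cong refl) (simp add: p_def orbit_avg_not)
  finally show ?thesis
    unfolding SymInf_eq_sum bdist_eq_sum by (simp add: divide_right_mono)
qed

theorem lemma3:
  fixes f fJ :: "('n::finite \<Rightarrow> bool) \<Rightarrow> bool" and J :: "'n set"
  assumes "J_symmetric J fJ"
    and "\<And>g. J_symmetric J g \<Longrightarrow> bdist f fJ \<le> bdist f g"
  shows "bdist f fJ \<le> SymInf f J \<and> SymInf f J \<le> 2 * bdist f fJ"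
proof
  show "bdist f fJ \<le> SymInf f J"
    using assms(2)[OF J_symmetric_majority] bdist_majority_le_SymInf by (rule order_trans)
  show "SymInf f J \<le> 2 * bdist f fJ"
    using assms(1) by (rule SymInf_le_twice_bdist)
qed

end
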